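(* Let $n\ge 1$ and let $M=\Gamma(H\,\overrightarrow{\times}\,G,(u,0))$, where $(H,u)$ is a linearly ordered group with strong unit $u$ and $G$ is a Dedekind $\sigma$-complete $\ell$-group. Let $x:\mathcal B(\mathbb R^n)\to M$ be an $n$-dimensional observable and define $F:\mathbb R^n\to M$ by $$F(t_1,\ldots,t_n)=x\big((-\infty,t_1)\times\cdots\times(-\infty,t_n)\big).$$ Then: (1) $F(s_1,\ldots,s_n)\le F(t_1,\ldots,t_n)$ whenever $s_i\le t_i$ for all $i$; (2) $\bigvee_{(s_1,\ldots,s_n)\in\mathbb R^n}F(s_1,\ldots,s_n)$ exists in $M$ and equals $1=(u,0)$; (3) for every $(t_1,\ldots,t_n)\in\mathbb R^n$, $\bigvee_{(s_1,\ldots,s_n)\ll(t_1,\ldots,t_n)}F(s_1,\ldots,s_n)$ exists and equals $F(t_1,\ldots,t_n)$; (4) for every $i\in\{1,\ldots,n\}$ and all $s_1,\ldots,s_n\in\mathbb R$, $\bigwedge_{t_i\in\mathbb R}F(s_1,\ldots,s_{i-1},t_i,s_{i+1},\ldots,s_n)$ exists and equals $0$; (5) (volume condition) for all reals $a_i\le b_i$, $i=1,\ldots,n$, $$1\ge \Delta_1(a_1,b_1)\big(\cdots\big(\Delta_n(a_n,b_n)F(s_1,\ldots,s_n)\big)\cdots\big)\ge 0,$$ where for a map $K:\mathbb R^n\to H\,\overrightarrow{\times}\,G$, $\Delta_i(a_i,b_i)K(s_1,\ldots,s_n)=K(s_1,\ldots,s_{i-1},b_i,s_{i+1},\ldots,s_n)-K(s_1,\ldots,s_{i-1},a_i,s_{i+1},\ldots,s_n)$,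 the subtraction being computed in the group $H\,\overrightarrow{\times}\,G$.
   Context: For po-groups $H,G$, $H\,\overrightarrow{\times}\,G$ is the group $H\times G$ with the lexicographic order: $(h_1,g_1)\le(h_2,g_2)$ iff $h_1<h_2$, or $h_1=h_2$ and $g_1\le g_2$. For a unital $\ell$-group $(K,v)$, $\Gamma(K,v)$ is the MV-algebra $([0,v];\oplus,',0,v)$ with $a\oplus b=(a+b)\wedge v$, $a'=v-a$. A $\ell$-group $G$ is Dedekind $\sigma$-complete if every countable subset bounded above has a supremum. On $M$ a partial addition is defined: $a+b$ is defined iff $a\le b'$ and then $a+b$ is the group sum. A sequence $(a_m)_m$ in $M$ is summable if every finite subfamily has a (finite, iterated) sum in $M$; its sum $\sum_m a_m$ is the supremum in $M$ of all finite partial sums, if it exists. An $n$-dimensional observable is a map $x:\mathcal B(\mathbb R^n)\to M$ (Borel sets) with $x(\mathbb R^n)=1$ such that for every sequence $(A_m)_m$ of pairwise disjoint Borel sets, $(x(A_m))_m$ is summable and $x(\bigcup_m A_m)=\sum_m x(A_m)$. For $\mathbf s,\mathbf t\in\mathbb R^n$, $\mathbf s\ll\mathbf t$ means $s_i<t_i$ for all $i$. *)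

theory Defs
  imports "HOL-Analysis.Analysis" "HOL-Library.Lattice_Algebras" "HOL-Library.Product_Plus"
begin

(* Lexicographic order on H x G (the po-group H lex-times G); group operations on pairs
   are the componentwise ones from Product_Plus. *)
definition lex_le :: "'h::linordered_ab_group_add \<times> 'g::lattice_ab_group_add \<Rightarrow> 'h \<times> 'g \<Rightarrow> bool" where
  "lex_le p q \<longleftrightarrow> fst p < fst q \<or> (fst p = fst q \<and> snd p \<le> snd q)"

definition strong_unit :: "'h::linordered_ab_group_add \<Rightarrow> bool" where
  "strong_unit u \<longleftrightarrow> 0 \<le> u \<and> (\<forall>h. \<exists>k::nat. h \<le> (\<Sum>_\<in>{..<k}. u))"

definition dedekind_sigma_complete :: "'g::lattice_ab_group_add itself \<Rightarrow> bool" where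
  "dedekind_sigma_complete _ \<longleftrightarrow>
     (\<forall>S::'g set. countable S \<and> S \<noteq> {} \<and> (\<exists>b. \<forall>a\<in>S. a \<le> b) \<longrightarrow>
        (\<exists>s. (\<forall>a\<in>S. a \<le> s) \<and> (\<forall>b. (\<forall>a\<in>S. a \<le> b) \<longrightarrow> s \<le> b)))"

definition Mset :: "'h::linordered_ab_group_add \<Rightarrow> ('h \<times> 'g::lattice_ab_group_add) set" where
  "Mset u = {a. lex_le (0,0) a \<and> lex_le a (u,0)}"

definition is_sup_M :: "'h::linordered_ab_group_add \<Rightarrow> ('h \<times> 'g::lattice_ab_group_add) set \<Rightarrow> 'h \<times> 'g \<Rightarrow> bool" where
  "is_sup_M u S s \<longleftrightarrow> s \<in> Mset u \<and> (\<forall>a\<in>S. lex_le a s) \<and>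
     (\<forall>b\<in>Mset u. (\<forall>a\<in>S. lex_le a b) \<longrightarrow> lex_le s b)"

definition is_inf_M :: "'h::linordered_ab_group_add \<Rightarrow> ('h \<times> 'g::lattice_ab_group_add) set \<Rightarrow> 'h \<times> 'g \<Rightarrow> bool" where
  "is_inf_M u S s \<longleftrightarrow> s \<in> Mset u \<and> (\<forall>a\<in>S. lex_le s a) \<and>
     (\<forall>b\<in>Mset u. (\<forall>a\<in>S. lex_le b a) \<longrightarrow> lex_le b s)"

(* A sequence in M is summable iff every finite subfamily has a (iterated partial) sum in M;
   as all terms are >= 0 this is: the group sum of every finite subfamily lies in M. *)
definition summable_M :: "'h::linordered_ab_group_add \<Rightarrow> (nat \<Rightarrow> 'h \<times> 'g::lattice_ab_group_add) \<Rightarrow> bool" where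
  "summable_M u a \<longleftrightarrow> (\<forall>m. a m \<in> Mset u) \<and> (\<forall>F. finite F \<longrightarrow> sum a F \<in> Mset u)"

definition has_sum_M :: "'h::linordered_ab_group_add \<Rightarrow> (nat \<Rightarrow> 'h \<times> 'g::lattice_ab_group_add) \<Rightarrow> 'h \<times> 'g \<Rightarrow> bool" where
  "has_sum_M u a s \<longleftrightarrow> summable_M u a \<and> is_sup_M u {sum a F | F. finite F} s"

definition observable :: "'h::linordered_ab_group_add \<Rightarrow> ((real^'n) set \<Rightarrow> 'h \<times> 'g::lattice_ab_group_add) \<Rightarrow> bool" where
  "observable u x \<longleftrightarrow>
     (\<forall>A \<in> sets (borel :: (real^'n) measure). x A \<in> Mset u) \<and>
     x UNIV = (u, 0) \<and>
     (\<forall>A :: nat \<Rightarrow> (real^'n) set. range A \<subseteq> sets borel \<and> disjoint_family A \<longrightarrow>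
        has_sum_M u (\<lambda>m. x (A m)) (x (\<Union>m. A m)))"

definition distr_fun :: "((real^'n) set \<Rightarrow> 'a) \<Rightarrow> real^'n \<Rightarrow> 'a" where
  "distr_fun x t = x {y. \<forall>i. y $ i < t $ i}"

definition vupd :: "real^'n \<Rightarrow> 'n \<Rightarrow> real \<Rightarrow> real^'n" where
  "vupd s i r = (\<chi> j. if j = i then r else s $ j)"

definition Delta :: "'n \<Rightarrow> real \<Rightarrow> real \<Rightarrow> (real^'n \<Rightarrow> 'c::ab_group_add) \<Rightarrow> real^'n \<Rightarrow> 'c" where
  "Delta i a b K = (\<lambda>s. K (vupd s i b) - K (vupd s i a))"

(* Delta_1(a_1,b_1)( ... (Delta_n(a_n,b_n) K) ... ), indices 1..n being the elements of the
   finite linearly ordered index type 'n in increasing order *)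
definition Delta_all :: "(real, 'n::{finite,linorder}) vec \<Rightarrow> (real, 'n) vec \<Rightarrow> ((real, 'n) vec \<Rightarrow> 'c::ab_group_add) \<Rightarrow> (real, 'n) vec \<Rightarrow> 'c" where
  "Delta_all a b K = foldr (\<lambda>i K'. Delta i (a $ i) (b $ i) K') (sorted_list_of_set (UNIV :: 'n set)) K"

end

theory Submission
  imports Defs
begin

(* Finite additivity of x makes F monotone, and sigma-additivity in M makes x continuous along
   monotone sequences of Borel sets (from above via the complements inside the first set).
   Every supremum and infimum in the statement is attained along a monotone sequence of lower
   orthants exhausting R^n, exhausting the open orthant below t, or shrinking to the empty set.
   Applying the differences Delta coordinate by coordinate turns an orthant into a half-open box,
   so the iterated difference is the value of x on the box [a, b) and lies in M. *)

lemma lex_le_refl [simp]: "lex_le p p"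
  unfolding lex_le_def by simp

lemma lex_le_trans [trans]: "lex_le p q \<Longrightarrow> lex_le q r \<Longrightarrow> lex_le p r"
  unfolding lex_le_def by (auto intro: order_trans)

lemma lex_le_antisym: "lex_le p q \<Longrightarrow> lex_le q p \<Longrightarrow> p = q"
  unfolding lex_le_def by (auto simp: prod_eq_iff)

lemma lex_le_add_mono: "lex_le p q \<Longrightarrow> lex_le r s \<Longrightarrow> lex_le (p + r) (q + s)"
  unfolding lex_le_def by (auto simp: add_strict_mono add_mono add_less_le_mono add_le_less_mono)

lemma lex_le_iff_diff_nonneg: "lex_le p q \<longleftrightarrow> lex_le 0 (q - p)"
  unfolding lex_le_def by auto

lemma lex_le_diff_antimono: "lex_le p q \<Longrightarrow> lex_le (r - q) (r - p)"
  unfolding lex_le_def by auto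

lemma lex_le_sum_nonneg: "(\<And>m. m \<in> F \<Longrightarrow> lex_le 0 (a m)) \<Longrightarrow> lex_le 0 (sum a F)"
proof (induction F rule: infinite_finite_induct)
  case (insert m F)
  then have "lex_le (0 + 0) (a m + sum a F)" by (intro lex_le_add_mono) auto
  then show ?case using insert by simp
qed auto

lemma lex_le_sum_mono:
  assumes "finite G" "F \<subseteq> G" "\<And>m. m \<in> G \<Longrightarrow> lex_le 0 (a m)"
  shows "lex_le (sum a F) (sum a G)"
proof -
  have "sum a G = sum a (G - F) + sum a F" using assms by (simp add: sum.subset_diff)
  moreover have "lex_le (0 + sum a F) (sum a (G - F) + sum a F)"
    using assms by (intro lex_le_add_mono lex_le_sum_nonneg) auto
  ultimately show ?thesis by simp
qed

lemma Mset_iff: "p \<in> Mset u \<longleftrightarrow> lex_le 0 p \<and> lex_le p (u, 0)"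
  unfolding Mset_def by (simp add: zero_prod_def)

lemma is_sup_M_cofinal:
  "is_sup_M u T s \<Longrightarrow> T \<subseteq> S \<Longrightarrow> (\<And>a. a \<in> S \<Longrightarrow> lex_le a s) \<Longrightarrow> is_sup_M u S s"
  unfolding is_sup_M_def by blast

lemma is_inf_M_cofinal:
  "is_inf_M u T s \<Longrightarrow> T \<subseteq> S \<Longrightarrow> (\<And>a. a \<in> S \<Longrightarrow> lex_le s a) \<Longrightarrow> is_inf_M u S s"
  unfolding is_inf_M_def by blast

lemma has_sum_M_finite_support:
  assumes "has_sum_M u a s" and zero: "\<And>m. N \<le> m \<Longrightarrow> a m = 0"
  shows "s = sum a {..<N}"
proof -
  have sm: "summable_M u a" and sup: "is_sup_M u {sum a F | F. finite F} s"
    using assms(1) unfolding has_sum_M_def by auto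
  have nonneg: "lex_le 0 (a m)" for m
    using sm unfolding summable_M_def Mset_iff by auto
  have "lex_le (sum a F) (sum a {..<N})" if "finite F" for F
  proof -
    have "sum a F = sum a (F \<inter> {..<N})"
      using that zero by (intro sum.mono_neutral_right) (auto simp: not_less)
    also have "lex_le \<dots> (sum a {..<N})"
      using nonneg by (intro lex_le_sum_mono) auto
    finally show ?thesis .
  qed
  moreover have "sum a {..<N} \<in> Mset u"
    using sm unfolding summable_M_def by auto
  ultimately have "lex_le s (sum a {..<N})"
    using sup unfolding is_sup_M_def by blast
  moreover have "lex_le (sum a {..<N}) s"
    using sup unfolding is_sup_M_def by blast
  ultimately show ?thesis by (rule lex_le_antisym)
qed

lemma observable_Mset: "observable u x \<Longrightarrow> A \<in> sets borel \<Longrightarrow> x A \<in> Mset u"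
  unfolding observable_def by auto

lemma observable_empty:
  assumes obs: "observable u x"
  shows "x {} = 0"
proof -
  have "has_sum_M u (\<lambda>_::nat. x {}) (x {})"
    using obs unfolding observable_def by (auto simp: disjoint_family_on_def)
  then have "lex_le (sum (\<lambda>_::nat. x {}) {0, 1}) (x {})"
    unfolding has_sum_M_def is_sup_M_def by blast
  then have "lex_le (x {}) 0"
    unfolding lex_le_def by auto
  moreover have "lex_le 0 (x {})"
    using observable_Mset[OF obs, of "{}"] by (simp add: Mset_iff)
  ultimately show ?thesis by (rule lex_le_antisym)
qed

lemma observable_finite_additive:
  fixes A :: "nat \<Rightarrow> (real^'n) set"
  assumes obs: "observable u x" and "range A \<subseteq> sets borel" "disjoint_family A"
  shows "x (\<Union>i<N. A i) = (\<Sum>i<N. x (A i))"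
proof -
  define A' where "A' m = (if m < N then A m else {})" for m
  have "range A' \<subseteq> sets borel" "disjoint_family A'"
    using assms by (auto simp: A'_def disjoint_family_on_def)
  then have "has_sum_M u (\<lambda>m. x (A' m)) (x (\<Union>m. A' m))"
    using obs unfolding observable_def by blast
  then have "x (\<Union>m. A' m) = (\<Sum>m<N. x (A' m))"
    by (rule has_sum_M_finite_support) (simp add: A'_def observable_empty[OF obs])
  moreover have "(\<Union>m. A' m) = (\<Union>i<N. A i)"
    by (auto simp: A'_def split: if_splits)
  ultimately show ?thesis by (simp add: A'_def)
qed

lemma observable_Un:
  assumes obs: "observable u x" and "S \<in> sets borel" "T \<in> sets borel" "S \<inter> T = {}"
  shows "x (S \<union> T) = x S + x T"
proof -
  define A where "A m = (if m = 0 then S else if m = 1 then T else {})" for m :: nat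
  have "range A \<subseteq> sets borel" "disjoint_family A"
    using assms by (auto simp: A_def disjoint_family_on_def)
  from observable_finite_additive[OF obs this, of 2] show ?thesis
    by (simp add: A_def numeral_2_eq_2 lessThan_Suc Un_commute add.commute)
qed

lemma
  assumes obs: "observable u x" and S: "S \<in> sets borel" and T: "T \<in> sets borel" and "S \<subseteq> T"
  shows observable_Diff: "x (T - S) = x T - x S"
    and observable_mono: "lex_le (x S) (x T)"
proof -
  have "x T = x S + x (T - S)"
    using observable_Un[OF obs S, of "T - S"] S T \<open>S \<subseteq> T\<close> by (simp add: Un_absorb1)
  then show "x (T - S) = x T - x S" by (simp add: algebra_simps)
  have "lex_le (x S + 0) (x S + x (T - S))"
    using observable_Mset[OF obs, of "T - S"] S T by (intro lex_le_add_mono) (auto simp: Mset_iff)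
  with \<open>x T = _\<close> show "lex_le (x S) (x T)" by simp
qed

lemma observable_sup_incseq:
  fixes B :: "nat \<Rightarrow> (real^'n) set"
  assumes obs: "observable u x" and B: "range B \<subseteq> sets borel" "incseq B"
  shows "is_sup_M u (range (\<lambda>k. x (B k))) (x (\<Union>k. B k))"
  unfolding is_sup_M_def
proof (intro conjI ballI impI)
  have UB: "(\<Union>k. B k) \<in> sets borel" using B by auto
  then show "x (\<Union>k. B k) \<in> Mset u" by (rule observable_Mset[OF obs])
  show "lex_le a (x (\<Union>k. B k))" if "a \<in> range (\<lambda>k. x (B k))" for a
    using that B UB by (auto intro: observable_mono[OF obs])
  fix c assume c: "c \<in> Mset u" and ub: "\<forall>a\<in>range (\<lambda>k. x (B k)). lex_le a c"
  have D: "range (disjointed B) \<subseteq> sets borel"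
    using B(1) by (rule sets.range_disjointed_sets)
  then have "has_sum_M u (\<lambda>m. x (disjointed B m)) (x (\<Union>m. disjointed B m))"
    using obs disjoint_family_disjointed unfolding observable_def by blast
  then have sum: "has_sum_M u (\<lambda>m. x (disjointed B m)) (x (\<Union>k. B k))"
    by (simp add: UN_disjointed_eq)
  have "lex_le (\<Sum>m\<in>F. x (disjointed B m)) c" if "finite F" for F
  proof -
    obtain k where k: "F \<subseteq> {..<k}"
      using \<open>finite F\<close> finite_nat_iff_bounded by blast
    have "lex_le (\<Sum>m\<in>F. x (disjointed B m)) (\<Sum>m<k. x (disjointed B m))"
      using k D observable_Mset[OF obs] by (intro lex_le_sum_mono) (auto simp: Mset_iff)
    also have "\<dots> = x (\<Union>i<k. disjointed B i)"
      using D disjoint_family_disjointed by (rule observable_finite_additive[OF obs, symmetric])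
    also have "\<dots> = x (\<Union>i<k. B i)"
      using finite_UN_disjointed_eq[of B k] by (simp add: atLeast0LessThan)
    also have "lex_le \<dots> (x (B k))"
      using B by (intro observable_mono[OF obs]) (auto simp: incseq_def, meson less_imp_le subsetD)
    also have "lex_le \<dots> c"
      using ub by blast
    finally show ?thesis .
  qed
  with sum c show "lex_le (x (\<Union>k. B k)) c"
    unfolding has_sum_M_def is_sup_M_def by blast
qed

lemma observable_inf_decseq_empty:
  fixes x :: "(real^'n) set \<Rightarrow> 'h::linordered_ab_group_add \<times> 'g::lattice_ab_group_add"
    and B :: "nat \<Rightarrow> (real^'n) set"
  assumes obs: "observable u x" and B: "range B \<subseteq> sets borel" "decseq B" "(\<Inter>k. B k) = {}"
  shows "is_inf_M u (range (\<lambda>k. x (B k))) 0"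
  unfolding is_inf_M_def
proof (intro conjI ballI impI)
  show "(0::'h \<times> 'g) \<in> Mset u"
    using observable_Mset[OF obs, of "{}"] observable_empty[OF obs] by simp
  show "lex_le 0 a" if "a \<in> range (\<lambda>k. x (B k))" for a
    using that B observable_Mset[OF obs] by (auto simp: Mset_iff)
  fix c assume c: "c \<in> Mset u" and lb: "\<forall>a\<in>range (\<lambda>k. x (B k)). lex_le c a"
  define C where "C k = B 0 - B k" for k
  have C: "range C \<subseteq> sets borel" "incseq C" "(\<Union>k. C k) = B 0"
    using B by (auto simp: C_def incseq_def decseq_def)
  have xC: "x (C k) = x (B 0) - x (B k)" for k
    unfolding C_def using B by (intro observable_Diff[OF obs]) (auto simp: decseq_def)
  have "lex_le 0 (x (B 0) - c)"
    using lb lex_le_iff_diff_nonneg by blast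
  moreover have "lex_le (x (B 0) - c) (x (B 0) - 0)"
    using c by (intro lex_le_diff_antimono) (simp add: Mset_iff)
  moreover have "lex_le (x (B 0)) (u, 0)"
    using observable_Mset[OF obs, of "B 0"] B(1) by (simp add: Mset_iff)
  ultimately have "x (B 0) - c \<in> Mset u"
    by (auto simp: Mset_iff intro: lex_le_trans)
  moreover have "lex_le (x (C k)) (x (B 0) - c)" for k
    unfolding xC using lb by (intro lex_le_diff_antimono) blast
  ultimately have "lex_le (x (B 0)) (x (B 0) - c)"
    using observable_sup_incseq[OF obs C(1,2)] unfolding C(3) is_sup_M_def by blast
  then show "lex_le c 0"
    unfolding lex_le_def by auto
qed

lemma vupd_nth [simp]: "vupd s i r $ j = (if j = i then r else s $ j)"
  by (simp add: vupd_def)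

lemma borel_lower_orthant: "{y::real^'n. \<forall>i. y $ i < t $ i} \<in> sets borel"
  by measurable

lemma distr_fun_mono:
  assumes obs: "observable u x" and "\<And>i. s $ i \<le> t $ i"
  shows "lex_le (distr_fun x s) (distr_fun x t)"
  unfolding distr_fun_def using assms(2)
  by (intro observable_mono[OF obs] borel_lower_orthant) (auto intro: less_le_trans)

lemma distr_fun_sup_incseq:
  fixes t :: "nat \<Rightarrow> real^'n"
  assumes obs: "observable u x" and "\<And>k i. t k $ i \<le> t (Suc k) $ i"
  shows "is_sup_M u (range (\<lambda>k. distr_fun x (t k))) (x (\<Union>k. {y. \<forall>i. y $ i < t k $ i}))"
  unfolding distr_fun_def using assms(2)
  by (intro observable_sup_incseq[OF obs] incseq_SucI)
    (force intro: less_le_trans borel_lower_orthant)+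

lemma distr_fun_inf_decseq:
  fixes t :: "nat \<Rightarrow> real^'n"
  assumes obs: "observable u x" and "\<And>k i. t (Suc k) $ i \<le> t k $ i"
    and "(\<Inter>k. {y. \<forall>i. y $ i < t k $ i}) = {}"
  shows "is_inf_M u (range (\<lambda>k. distr_fun x (t k))) 0"
  unfolding distr_fun_def using assms(2,3)
  by (intro observable_inf_decseq_empty[OF obs] decseq_SucI)
    (force intro: less_le_trans borel_lower_orthant)+

lemma distr_fun_sup_UNIV:
  fixes x :: "(real^'n) set \<Rightarrow> 'h::linordered_ab_group_add \<times> 'g::lattice_ab_group_add"
  assumes obs: "observable u x"
  shows "is_sup_M u (range (distr_fun x)) (u, 0)"
proof (rule is_sup_M_cofinal)
  have "\<forall>\<^sub>F k in sequentially. \<forall>i. y $ i < real k" for y :: "real^'n"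
    using filterlim_real_sequentially by (intro eventually_all_finite) (simp add: filterlim_at_top_dense)
  then have "(\<Union>k. {y::real^'n. \<forall>i. y $ i < (\<chi> i. real k) $ i}) = UNIV"
    by (force simp: eventually_sequentially)
  then show "is_sup_M u (range (\<lambda>k. distr_fun x (\<chi> i. real k))) (u, 0)"
    using distr_fun_sup_incseq[OF obs, of "\<lambda>k. \<chi> i. real k"] obs by (simp add: observable_def)
  show "range (\<lambda>k. distr_fun x (\<chi> i. real k)) \<subseteq> range (distr_fun x)"
    by auto
  show "lex_le a (u, 0)" if "a \<in> range (distr_fun x)" for a
    using that observable_Mset[OF obs borel_lower_orthant] by (auto simp: distr_fun_def Mset_iff)
qed

lemma distr_fun_left_continuous:
  fixes x :: "(real^'n) set \<Rightarrow> 'h::linordered_ab_group_add \<times> 'g::lattice_ab_group_add"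
  assumes obs: "observable u x"
  shows "is_sup_M u (distr_fun x ` {s. \<forall>i. s $ i < t $ i}) (distr_fun x t)"
proof (rule is_sup_M_cofinal)
  define r where "r k = (\<chi> i. t $ i - inverse (real (Suc k)))" for k
  have "\<forall>\<^sub>F k in sequentially. \<forall>i. y $ i < r k $ i" if "\<forall>i. y $ i < t $ i" for y
  proof (intro eventually_all_finite)
    fix i
    have "(\<lambda>k. t $ i - inverse (real (Suc k))) \<longlonglongrightarrow> t $ i - 0"
      by (intro tendsto_diff tendsto_const LIMSEQ_inverse_real_of_nat)
    from order_tendstoD(1)[OF this] show "\<forall>\<^sub>F k in sequentially. y $ i < r k $ i"
      using that by (simp add: r_def)
  qed
  then have "(\<Union>k. {y. \<forall>i. y $ i < r k $ i}) = {y. \<forall>i. y $ i < t $ i}"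
    by (force simp: eventually_sequentially r_def intro: less_trans)
  moreover have "r k $ i \<le> r (Suc k) $ i" for k i
    by (simp add: r_def le_imp_inverse_le)
  ultimately show "is_sup_M u (range (\<lambda>k. distr_fun x (r k))) (distr_fun x t)"
    using distr_fun_sup_incseq[OF obs, of r] by (simp add: distr_fun_def)
  show "range (\<lambda>k. distr_fun x (r k)) \<subseteq> distr_fun x ` {s. \<forall>i. s $ i < t $ i}"
    by (auto simp: r_def)
  show "lex_le a (distr_fun x t)" if "a \<in> distr_fun x ` {s. \<forall>i. s $ i < t $ i}" for a
    using that by (auto intro: distr_fun_mono[OF obs] less_imp_le)
qed

lemma distr_fun_inf_coordinate:
  fixes x :: "(real^'n) set \<Rightarrow> 'h::linordered_ab_group_add \<times> 'g::lattice_ab_group_add"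
  assumes obs: "observable u x"
  shows "is_inf_M u (range (\<lambda>r. distr_fun x (vupd s i r))) 0"
proof (rule is_inf_M_cofinal)
  have "(\<Inter>k. {y. \<forall>j. y $ j < vupd s i (- real k) $ j}) = {}"
  proof (intro equals0I)
    fix y assume y: "y \<in> (\<Inter>k. {y. \<forall>j. y $ j < vupd s i (- real k) $ j})"
    obtain k :: nat where "- y $ i < real k"
      using reals_Archimedean2 by blast
    moreover have "y $ i < vupd s i (- real k) $ i"
      using y by blast
    ultimately show False by simp
  qed
  moreover have "vupd s i (- real (Suc k)) $ j \<le> vupd s i (- real k) $ j" for k j
    by simp
  ultimately show "is_inf_M u (range (\<lambda>k. distr_fun x (vupd s i (- real k)))) 0"
    by (rule distr_fun_inf_decseq[OF obs, rotated])
  show "range (\<lambda>k. distr_fun x (vupd s i (- real k))) \<subseteq> range (\<lambda>r. distr_fun x (vupd s i r))"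
    by auto
  show "lex_le 0 a" if "a \<in> range (\<lambda>r. distr_fun x (vupd s i r))" for a
    using that observable_Mset[OF obs borel_lower_orthant] unfolding distr_fun_def Mset_iff by blast
qed

definition box_orthant :: "'n set \<Rightarrow> real^'n \<Rightarrow> real^'n \<Rightarrow> real^'n \<Rightarrow> (real^'n) set" where
  "box_orthant I a b s =
     {y. \<forall>i. (i \<in> I \<longrightarrow> a $ i \<le> y $ i \<and> y $ i < b $ i) \<and> (i \<notin> I \<longrightarrow> y $ i < s $ i)}"

lemma borel_box_orthant: "box_orthant I a b s \<in> sets borel"
  unfolding box_orthant_def by measurable

lemma mem_box_orthant:
  "y \<in> box_orthant I a b s \<longleftrightarrow>
    (\<forall>j\<in>I. a $ j \<le> y $ j \<and> y $ j < b $ j) \<and> (\<forall>j\<in>-I. y $ j < s $ j)"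
  unfolding box_orthant_def by blast

lemma box_orthant_vupd:
  assumes "i \<notin> I" "a $ i \<le> b $ i"
  shows "box_orthant I a b (vupd s i (a $ i)) \<subseteq> box_orthant I a b (vupd s i (b $ i))"
      (is "?A \<subseteq> ?B")
    and "box_orthant I a b (vupd s i (b $ i)) - box_orthant I a b (vupd s i (a $ i))
      = box_orthant (insert i I) a b s"
proof -
  have "-I = insert i (- insert i I)"
    using assms(1) by blast
  with assms(2) show "?A \<subseteq> ?B" and "?B - ?A = box_orthant (insert i I) a b s"
    by (auto simp: mem_box_orthant)
qed

lemma Delta_box_orthant:
  assumes obs: "observable u x" and "i \<notin> I" "a $ i \<le> b $ i"
  shows "Delta i (a $ i) (b $ i) (\<lambda>s. x (box_orthant I a b s)) s
    = x (box_orthant (insert i I) a b s)"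
  using observable_Diff[OF obs borel_box_orthant borel_box_orthant box_orthant_vupd(1)[OF assms(2,3)]]
  unfolding Delta_def box_orthant_vupd(2)[OF assms(2,3)] by simp

lemma foldr_Delta_distr_fun:
  assumes obs: "observable u x" and ab: "\<And>i. a $ i \<le> b $ i" and "distinct L"
  shows "foldr (\<lambda>i K. Delta i (a $ i) (b $ i) K) L (distr_fun x)
    = (\<lambda>s. x (box_orthant (set L) a b s))"
  using \<open>distinct L\<close>
proof (induction L)
  case Nil
  show ?case by (simp add: fun_eq_iff distr_fun_def box_orthant_def)
next
  case (Cons j L)
  then show ?case by (simp add: Cons.IH Delta_box_orthant[OF obs _ ab])
qed

lemma Delta_all_distr_fun:
  assumes obs: "observable u x" and "\<And>i. a $ i \<le> b $ i"
  shows "Delta_all a b (distr_fun x) s = x {y. \<forall>i. a $ i \<le> y $ i \<and> y $ i < b $ i}"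
  using foldr_Delta_distr_fun[OF assms, of "sorted_list_of_set UNIV"]
  by (simp add: Delta_all_def box_orthant_def)

theorem lemma3p2:
  fixes u :: "'h::linordered_ab_group_add"
    and x :: "(real, 'n::{finite,linorder}) vec set \<Rightarrow> 'h \<times> 'g::lattice_ab_group_add"
  assumes "strong_unit u"
    and "dedekind_sigma_complete TYPE('g)"
    and "observable u x"
  shows "(\<forall>s t. (\<forall>i. s $ i \<le> t $ i) \<longrightarrow> lex_le (distr_fun x s) (distr_fun x t))
    \<and> is_sup_M u (range (distr_fun x)) (u, 0)
    \<and> (\<forall>t. is_sup_M u (distr_fun x ` {s. \<forall>i. s $ i < t $ i}) (distr_fun x t))
    \<and> (\<forall>i s. is_inf_M u ((\<lambda>r. distr_fun x (vupd s i r)) ` UNIV) (0, 0))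
    \<and> (\<forall>a b s. (\<forall>i. a $ i \<le> b $ i) \<longrightarrow>
          lex_le (0, 0) (Delta_all a b (distr_fun x) s) \<and> lex_le (Delta_all a b (distr_fun x) s) (u, 0))"
proof -
  note obs = assms(3)
  have volume: "lex_le 0 (Delta_all a b (distr_fun x) s) \<and> lex_le (Delta_all a b (distr_fun x) s) (u, 0)"
    if "\<forall>i. a $ i \<le> b $ i" for a b s
  proof -
    have "{y::(real, 'n) vec. \<forall>i. a $ i \<le> y $ i \<and> y $ i < b $ i} \<in> sets borel"
      by measurable
    then show ?thesis
      using observable_Mset[OF obs] Delta_all_distr_fun[OF obs] that by (simp add: Mset_iff)
  qed
  show ?thesis
    unfolding zero_prod_def[symmetric]
    using distr_fun_mono[OF obs] distr_fun_sup_UNIV[OF obs] distr_fun_left_continuous[OF obs]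
      distr_fun_inf_coordinate[OF obs] volume
    by blast
qed

end
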